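(* Let $O$ be a finite order with $n$ elements having a questionable representation of finite width $k\ge2$ and finite length $l$. Then the comparability digraph of $O$ (arc $x\to y$ iff $x<y$) has a clique-width expression using at most $k$ labels, whose syntax tree has depth at most $l\,(k(k-1)+\lceil\log_2(k-1)\rceil)+\lceil\log_2 n\rceil+(l-1)(k-1)$.
   Context: For an ordinal $j$, $\mathcal O_j=(O_k)_{k<j}$ is a sequence of orders; a word of length $\ell\le j$ is $(x_k)_{k<\ell}$ with $x_k\in\mathrm{Dom}(O_k)$. The question of words $X,Y$ is $(k,x_k,y_k)$ for the least $k<\min(\mathrm{len}X,\mathrm{len}Y)$ with $x_k\ne y_k$, if it exists. For $i<j$, $\mathrm{Next}(i,j,\mathcal O_j)$ is the partial order on words of length $\ell$, $i\le\ell<j$, with $X<Y$ iff their question exists and $x_k<y_k$ in $O_k$; otherwise incomparable. A questionable representation of an order $O$ is an injective $f$ into some $\mathrm{Next}(i,j,\mathcal O_j)$ with $f(x)<f(y)\iff x<y$ for all $x,y$; its length is $j$ and its width is the supremum of the cardinalities of the $\mathrm{Dom}(O_k)$. Clique-width expressions (vertex creation with a label, disjoint union, relabelling, and adding all arcs from one label class to another) are the standard notion for directed graphs. *)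

theory Defs
  imports Complex_Main
begin

definition strict_order_on :: "'a set \<Rightarrow> ('a \<Rightarrow> 'a \<Rightarrow> bool) \<Rightarrow> bool" where
  "strict_order_on A r \<longleftrightarrow>
     (\<forall>x\<in>A. \<not> r x x) \<and> (\<forall>x\<in>A. \<forall>y\<in>A. \<forall>z\<in>A. r x y \<longrightarrow> r y z \<longrightarrow> r x z)"

definition is_word :: "(nat \<Rightarrow> 'b set) \<Rightarrow> 'b list \<Rightarrow> bool" where
  "is_word D X \<longleftrightarrow> (\<forall>k<length X. X ! k \<in> D k)"

definition next_dom :: "nat \<Rightarrow> nat \<Rightarrow> (nat \<Rightarrow> 'b set) \<Rightarrow> 'b list set" where
  "next_dom i j D = {X. is_word D X \<and> i \<le> length X \<and> length X < j}"

text \<open>The question of X, Y is at the least index k < min lengths with X!k ~= Y!k.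
  X < Y in Next iff the question exists and X!k < Y!k in O_k.\<close>
definition next_less :: "(nat \<Rightarrow> 'b \<Rightarrow> 'b \<Rightarrow> bool) \<Rightarrow> 'b list \<Rightarrow> 'b list \<Rightarrow> bool" where
  "next_less R X Y \<longleftrightarrow>
     (\<exists>k<min (length X) (length Y). (\<forall>m<k. X ! m = Y ! m) \<and> X ! k \<noteq> Y ! k
        \<and> R k (X ! k) (Y ! k))"

definition finite_width :: "nat \<Rightarrow> (nat \<Rightarrow> 'b set) \<Rightarrow> nat \<Rightarrow> bool" where
  "finite_width j D w \<longleftrightarrow>
     (\<forall>k<j. finite (D k) \<and> card (D k) \<le> w) \<and> (\<exists>k<j. card (D k) = w)"

definition has_qrep :: "'a set \<Rightarrow> ('a \<Rightarrow> 'a \<Rightarrow> bool) \<Rightarrow> 'b itself \<Rightarrow> nat \<Rightarrow> nat \<Rightarrow> bool" where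
  "has_qrep V lt _ w j \<longleftrightarrow>
     (\<exists>i (D :: nat \<Rightarrow> 'b set) R f.
        i < j \<and> (\<forall>k<j. strict_order_on (D k) (R k)) \<and> finite_width j D w \<and>
        inj_on f V \<and> f ` V \<subseteq> next_dom i j D \<and>
        (\<forall>x\<in>V. \<forall>y\<in>V. next_less R (f x) (f y) \<longleftrightarrow> lt x y))"

datatype 'v cwexp =
    CVertex 'v nat
  | CUnion "'v cwexp" "'v cwexp"
  | CRelabel nat nat "'v cwexp"
  | CArcs nat nat "'v cwexp"

fun cw_verts :: "'v cwexp \<Rightarrow> 'v set" where
  "cw_verts (CVertex v i) = {v}"
| "cw_verts (CUnion e1 e2) = cw_verts e1 \<union> cw_verts e2"
| "cw_verts (CRelabel i j e) = cw_verts e"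
| "cw_verts (CArcs i j e) = cw_verts e"

fun cw_lab :: "'v cwexp \<Rightarrow> 'v \<Rightarrow> nat" where
  "cw_lab (CVertex v i) = (\<lambda>u. i)"
| "cw_lab (CUnion e1 e2) = (\<lambda>u. if u \<in> cw_verts e1 then cw_lab e1 u else cw_lab e2 u)"
| "cw_lab (CRelabel i j e) = (\<lambda>u. if cw_lab e u = i then j else cw_lab e u)"
| "cw_lab (CArcs i j e) = cw_lab e"

fun cw_arcs :: "'v cwexp \<Rightarrow> ('v \<times> 'v) set" where
  "cw_arcs (CVertex v i) = {}"
| "cw_arcs (CUnion e1 e2) = cw_arcs e1 \<union> cw_arcs e2"
| "cw_arcs (CRelabel i j e) = cw_arcs e"
| "cw_arcs (CArcs i j e) = cw_arcs e \<union>
     {(u, w). u \<in> cw_verts e \<and> w \<in> cw_verts e \<and> cw_lab e u = i \<and> cw_lab e w = j}"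

fun cw_wf :: "'v cwexp \<Rightarrow> bool" where
  "cw_wf (CVertex v i) = True"
| "cw_wf (CUnion e1 e2) = (cw_wf e1 \<and> cw_wf e2 \<and> cw_verts e1 \<inter> cw_verts e2 = {})"
| "cw_wf (CRelabel i j e) = cw_wf e"
| "cw_wf (CArcs i j e) = (i \<noteq> j \<and> cw_wf e)"

fun cw_labels :: "'v cwexp \<Rightarrow> nat set" where
  "cw_labels (CVertex v i) = {i}"
| "cw_labels (CUnion e1 e2) = cw_labels e1 \<union> cw_labels e2"
| "cw_labels (CRelabel i j e) = {i, j} \<union> cw_labels e"
| "cw_labels (CArcs i j e) = {i, j} \<union> cw_labels e"

fun cw_depth :: "'v cwexp \<Rightarrow> nat" where
  "cw_depth (CVertex v i) = 0"
| "cw_depth (CUnion e1 e2) = Suc (max (cw_depth e1) (cw_depth e2))"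
| "cw_depth (CRelabel i j e) = Suc (cw_depth e)"
| "cw_depth (CArcs i j e) = Suc (cw_depth e)"

end

(* Build the expression along the trie of the words f x.  For a prefix p, let E p be the set of
   elements whose word properly extends p, and label the letters at position |p| injectively by
   at most k labels.  The expressions for the children E (p @ [a]) (uniformly labelled by the label
   of a) and the single vertices with word p @ [a] are united in a Kraft-balanced way, which costs
   depth 1 + log |E p| on top of the children's depth budget.  Comparabilities inside a child are
   already present; elements with different letters at position |p| compare exactly as these
   letters do in the order at that position, so one arc insertion per related pair of letters
   supplies the rest, and k - 1 relabellings make E p uniformly labelled again.  Every level adds
   the same constant, the logarithmic terms telescope, and an element with the empty word is
   incomparable to all others and added by one last union. *)

theory Submission
  imports Defs "HOL-Library.Log_Nat" "HOL-Library.Disjoint_Sets"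
begin

lemma next_less_irrefl: "\<not> next_less R X X"
  unfolding next_less_def by auto

lemma next_less_prefix_incomparable:
  assumes "take (length X) Y = X"
  shows "\<not> next_less R X Y" and "\<not> next_less R Y X"
  using assms unfolding next_less_def by (metis min_less_iff_conj nth_take)+

lemma next_less_at_difference:
  assumes "take d X = take d Y" "d < length X" "d < length Y" "X ! d \<noteq> Y ! d"
  shows "next_less R X Y \<longleftrightarrow> R d (X ! d) (Y ! d)"
proof -
  have agree: "\<forall>m<d. X ! m = Y ! m"
    using assms(1) by (metis nth_take)
  have question: "j = d" if "\<forall>m<j. X ! m = Y ! m" "X ! j \<noteq> Y ! j" for j
    using agree assms(4) that by (cases j d rule: linorder_cases) auto
  show ?thesis
  proof
    assume "next_less R X Y"
    then obtain j where j: "\<forall>m<j. X ! m = Y ! m" "X ! j \<noteq> Y ! j" "R j (X ! j) (Y ! j)"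
      unfolding next_less_def by blast
    then show "R d (X ! d) (Y ! d)"
      using question[OF j(1,2)] by simp
  next
    assume "R d (X ! d) (Y ! d)"
    then show "next_less R X Y"
      unfolding next_less_def using agree assms(2-4) by (intro exI[of _ d]) simp
  qed
qed

lemma card_strict_order_pairs:
  assumes "finite A" "strict_order_on A r"
  shows "2 * card {(a, b). a \<in> A \<and> b \<in> A \<and> r a b} \<le> card A * (card A - 1)"
proof -
  define Q where "Q = {(a, b). a \<in> A \<and> b \<in> A \<and> r a b}"
  have irrefl: "\<forall>a\<in>A. \<not> r a a"
    and trans: "\<forall>a\<in>A. \<forall>b\<in>A. \<forall>c\<in>A. r a b \<longrightarrow> r b c \<longrightarrow> r a c"
    using assms(2) unfolding strict_order_on_def by blast+
  have swap: "prod.swap ` Q = {(a, b). a \<in> A \<and> b \<in> A \<and> r b a}"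
    unfolding Q_def by auto
  have disj1: "Q \<inter> prod.swap ` Q = {}"
    unfolding swap unfolding Q_def using irrefl trans by blast
  have disj2: "(Q \<union> prod.swap ` Q) \<inter> Id_on A = {}"
    unfolding swap unfolding Q_def using irrefl by blast
  have sub: "Q \<union> prod.swap ` Q \<union> Id_on A \<subseteq> A \<times> A"
    unfolding swap unfolding Q_def by blast
  have fin: "finite Q" "finite (Q \<union> prod.swap ` Q)" "finite (Id_on A)"
    using finite_subset[OF sub] assms(1) by auto
  have "2 * card Q + card A = card (Q \<union> prod.swap ` Q) + card (Id_on A)"
    using fin(1) disj1 card_image[of "\<lambda>a. (a, a)" A]
      card_image[OF inj_on_subset[OF inj_swap subset_UNIV], of Q]
    by (simp add: card_Un_disjoint Id_on_def UNION_singleton_eq_range inj_on_def)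
  also have "\<dots> = card (Q \<union> prod.swap ` Q \<union> Id_on A)"
    using fin(2,3) disj2 by (rule card_Un_disjoint[symmetric])
  also have "\<dots> \<le> card A * card A"
    using card_mono[OF _ sub] assms(1) by (simp add: card_cartesian_product)
  finally show ?thesis
    unfolding Q_def by (simp add: diff_mult_distrib2)
qed

lemma power_two_add_le:
  fixes X :: nat
  assumes "2 ^ b dvd X" "X + 2 ^ b < 2 ^ D"
  shows "X + 2 ^ Suc b \<le> 2 ^ D"
proof -
  have "(2::nat) ^ b < 2 ^ D"
    using assms(2) by linarith
  then have "b < D"
    by simp
  obtain c where X: "X = 2 ^ b * c"
    using assms(1) by blast
  have D: "(2::nat) ^ D = 2 ^ b * 2 ^ (D - b)"
    using \<open>b < D\<close> by (simp flip: power_add)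
  have "2 ^ b * (c + 1) < 2 ^ b * 2 ^ (D - b)"
    using assms(2) unfolding X D by (simp add: distrib_left)
  then have "c + 1 < 2 ^ (D - b)"
    by (subst (asm) mult_less_cancel1) simp
  then have "2 ^ b * (c + 2) \<le> 2 ^ b * 2 ^ (D - b)"
    by (intro mult_le_mono2) simp
  then show ?thesis
    unfolding X D by (simp add: distrib_left)
qed

lemma power_sum_merge_two_smallest:
  fixes d :: "'i \<Rightarrow> nat"
  assumes "finite I" "i1 \<in> I" "i2 \<in> I - {i1}" "\<forall>i\<in>I - {i1}. d i2 \<le> d i"
    and "(\<Sum>i\<in>I. 2 ^ d i) \<le> (2::nat) ^ D"
  shows "(\<Sum>i\<in>I - {i1, i2}. 2 ^ d i) + 2 ^ Suc (d i2) \<le> (2::nat) ^ D"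
proof (rule power_two_add_le)
  have "I = insert i1 (insert i2 (I - {i1, i2}))" "i1 \<notin> insert i2 (I - {i1, i2})"
    and "i2 \<notin> I - {i1, i2}" "finite (I - {i1, i2})"
    using assms(1-3) by auto
  then have "(\<Sum>i\<in>I. (2::nat) ^ d i) = 2 ^ d i1 + (2 ^ d i2 + (\<Sum>i\<in>I - {i1, i2}. 2 ^ d i))"
    by (metis finite_insert sum.insert)
  then show "(\<Sum>i\<in>I - {i1, i2}. 2 ^ d i) + 2 ^ d i2 < (2::nat) ^ D"
    using assms(5) zero_less_power[of "2::nat" "d i1"] by linarith
  show "(2::nat) ^ d i2 dvd (\<Sum>i\<in>I - {i1, i2}. 2 ^ d i)"
    using assms(4) by (intro dvd_sum) (simp add: le_imp_power_dvd)
qed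

lemma finite_cw_verts: "finite (cw_verts e)"
  by (induction e) auto

lemma cw_verts_nonempty: "cw_verts e \<noteq> {}"
  by (induction e) auto

lemma cw_lab_in_cw_labels: "v \<in> cw_verts e \<Longrightarrow> cw_lab e v \<in> cw_labels e"
  by (induction e) auto

definition cw_merges :: "'v cwexp set \<Rightarrow> 'v cwexp \<Rightarrow> bool" where
  "cw_merges I u \<longleftrightarrow> cw_wf u \<and> cw_verts u = \<Union>(cw_verts ` I) \<and> cw_arcs u = \<Union>(cw_arcs ` I) \<and>
     cw_labels u = \<Union>(cw_labels ` I) \<and> (\<forall>e\<in>I. \<forall>v\<in>cw_verts e. cw_lab u v = cw_lab e v)"

lemma cw_merges_singleton: "cw_wf e \<Longrightarrow> cw_merges {e} e"
  unfolding cw_merges_def by simp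

lemma cw_merges_CUnion:
  assumes "cw_merges (insert (CUnion e1 e2) I) u" "cw_verts e1 \<inter> cw_verts e2 = {}"
  shows "cw_merges (insert e1 (insert e2 I)) u"
  using assms unfolding cw_merges_def by auto

lemma disjoint_family_on_CUnion:
  assumes "disjoint_family_on cw_verts I" "e1 \<in> I" "e2 \<in> I" "e1 \<noteq> e2"
  shows "disjoint_family_on cw_verts (insert (CUnion e1 e2) (I - {e1, e2}))"
    and "CUnion e1 e2 \<notin> I - {e1, e2}"
proof -
  have disj: "cw_verts a \<inter> cw_verts b = {}" if "a \<in> I" "b \<in> I" "a \<noteq> b" for a b
    using disjoint_family_onD[OF assms(1)] that .
  have disj_rest: "cw_verts (CUnion e1 e2) \<inter> cw_verts r = {}" if "r \<in> I - {e1, e2}" for r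
    using disj[of e1 r] disj[of e2 r] that assms(2,3) by auto
  then show notin: "CUnion e1 e2 \<notin> I - {e1, e2}"
    using cw_verts_nonempty[of "CUnion e1 e2"] by blast
  have "disjoint_family_on cw_verts (I - {e1, e2})"
    using disjoint_family_on_mono[OF Diff_subset assms(1)] .
  then show "disjoint_family_on cw_verts (insert (CUnion e1 e2) (I - {e1, e2}))"
    using disj_rest by (subst disjoint_family_on_insert[OF notin]) blast
qed

(* As in the proof of Kraft's inequality: uniting the two shallowest expressions keeps the sum of
   the 2 ^ depth below 2 ^ D. *)
lemma cw_merge_kraft:
  assumes "finite I" "I \<noteq> {}" "\<forall>e\<in>I. cw_wf e" "disjoint_family_on cw_verts I"
    and "(\<Sum>e\<in>I. 2 ^ cw_depth e) \<le> (2::nat) ^ D"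
  shows "\<exists>u. cw_merges I u \<and> cw_depth u \<le> D"
  using assms
proof (induction "card I" arbitrary: I rule: less_induct)
  case less
  show ?case
  proof (cases "card I = 1")
    case True
    then obtain e where "I = {e}"
      by (rule card_1_singletonE)
    then show ?thesis
      using less.prems cw_merges_singleton by fastforce
  next
    case False
    obtain e1 where e1: "e1 \<in> I" "\<forall>e\<in>I. cw_depth e1 \<le> cw_depth e"
      using ex_has_least_nat[of "\<lambda>e. e \<in> I" _ cw_depth] less.prems(2) by blast
    have "I \<noteq> {e1}"
      using False by auto
    then obtain e2 where e2: "e2 \<in> I - {e1}" "\<forall>e\<in>I - {e1}. cw_depth e2 \<le> cw_depth e"
      using ex_has_least_nat[of "\<lambda>e. e \<in> I - {e1}" _ cw_depth] e1(1) by blast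
    then have "e2 \<in> I" "e1 \<noteq> e2"
      by auto
    define I' where "I' = insert (CUnion e1 e2) (I - {e1, e2})"
    have disj12: "cw_verts e1 \<inter> cw_verts e2 = {}"
      using disjoint_family_onD[OF less.prems(4) e1(1)] e2(1) by blast
    note merged = disjoint_family_on_CUnion[OF less.prems(4) e1(1) \<open>e2 \<in> I\<close> \<open>e1 \<noteq> e2\<close>]
    have I: "I = insert e1 (insert e2 (I - {e1, e2}))"
      using e1(1) e2(1) by auto
    have "(\<Sum>e\<in>I'. 2 ^ cw_depth e) = (\<Sum>e\<in>I - {e1, e2}. 2 ^ cw_depth e) + (2::nat) ^ Suc (cw_depth e2)"
      using merged(2) e1(2) e2(1) less.prems(1) unfolding I'_def by simp
    also have "\<dots> \<le> 2 ^ D"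
      by (rule power_sum_merge_two_smallest) (use less.prems(1,5) e1(1) e2 in auto)
    finally have sum: "(\<Sum>e\<in>I'. 2 ^ cw_depth e) \<le> (2::nat) ^ D" .
    have card: "card I' < card I"
      using merged(2) less.prems(1) \<open>e1 \<noteq> e2\<close> unfolding I'_def by (subst (2) I) simp
    have wf: "\<forall>e\<in>I'. cw_wf e"
      using less.prems(3) e1(1) e2(1) disj12 unfolding I'_def by simp
    have "finite I'" "I' \<noteq> {}"
      using less.prems(1) unfolding I'_def by auto
    then obtain u where "cw_merges I' u" "cw_depth u \<le> D"
      using less.hyps[OF card _ _ wf merged(1)[folded I'_def] sum] by blast
    then have "cw_merges (insert e1 (insert e2 (I - {e1, e2}))) u" "cw_depth u \<le> D"
      using cw_merges_CUnion disj12 unfolding I'_def by blast+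
    then show ?thesis
      by (subst I) blast
  qed
qed

lemma cw_merge_ceillog2:
  assumes "finite I" "I \<noteq> {}" "disjoint_family_on cw_verts I"
    and "\<forall>e\<in>I. cw_wf e \<and> cw_depth e \<le> c + ceillog2 (card (cw_verts e))"
  shows "\<exists>u. cw_merges I u \<and> cw_depth u \<le> c + 1 + ceillog2 (card (\<Union>(cw_verts ` I)))"
proof -
  have "(\<Sum>e\<in>I. (2::nat) ^ cw_depth e) \<le> (\<Sum>e\<in>I. 2 ^ (c + 1) * card (cw_verts e))"
  proof (intro sum_mono)
    fix e assume "e \<in> I"
    have "(2::nat) ^ cw_depth e \<le> 2 ^ c * 2 ^ ceillog2 (card (cw_verts e))"
      using assms(4) \<open>e \<in> I\<close> by (simp flip: power_add)
    also have "\<dots> \<le> 2 ^ c * (2 * card (cw_verts e))"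
      using two_power_ceillog2_gt[of "card (cw_verts e)"] finite_cw_verts[of e] cw_verts_nonempty[of e]
      by (simp add: card_gt_0_iff less_imp_le)
    finally show "(2::nat) ^ cw_depth e \<le> 2 ^ (c + 1) * card (cw_verts e)"
      by simp
  qed
  also have "\<dots> = 2 ^ (c + 1) * card (\<Union>(cw_verts ` I))"
    using card_UN_disjoint'[OF assms(3) finite_cw_verts assms(1)] by (simp add: sum_distrib_left)
  also have "\<dots> \<le> 2 ^ (c + 1) * 2 ^ ceillog2 (card (\<Union>(cw_verts ` I)))"
    using le_two_power_ceillog2 by simp
  also have "\<dots> = 2 ^ (c + 1 + ceillog2 (card (\<Union>(cw_verts ` I))))"
    by (simp add: power_add)
  finally show ?thesis
    using cw_merge_kraft[OF assms(1,2) _ assms(3)] assms(4) by blast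
qed

lemma cw_merge_pieces:
  assumes "finite S" "S \<noteq> {}"
    and own: "\<And>v. v \<in> S \<Longrightarrow> v \<in> cw_verts (piece v)"
    and closed: "\<And>v w. v \<in> S \<Longrightarrow> w \<in> cw_verts (piece v) \<Longrightarrow> w \<in> S \<and> piece w = piece v"
    and small: "\<And>v. v \<in> S \<Longrightarrow> cw_wf (piece v) \<and> cw_depth (piece v) \<le> c + ceillog2 (card (cw_verts (piece v)))"
  shows "\<exists>u. cw_wf u \<and> cw_verts u = S \<and> cw_arcs u = (\<Union>v\<in>S. cw_arcs (piece v)) \<and>
    cw_labels u = (\<Union>v\<in>S. cw_labels (piece v)) \<and> (\<forall>v\<in>S. cw_lab u v = cw_lab (piece v) v) \<and>
    cw_depth u \<le> c + 1 + ceillog2 (card S)"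
proof -
  have disj: "disjoint_family_on cw_verts (piece ` S)"
    unfolding disjoint_family_on_def
  proof (intro ballI impI)
    fix e1 e2 assume "e1 \<in> piece ` S" "e2 \<in> piece ` S" "e1 \<noteq> e2"
    then obtain v w where vw: "v \<in> S" "w \<in> S" "e1 = piece v" "e2 = piece w"
      by blast
    show "cw_verts e1 \<inter> cw_verts e2 = {}"
    proof (rule equals0I)
      fix z assume "z \<in> cw_verts e1 \<inter> cw_verts e2"
      then have "piece z = e1" "piece z = e2"
        using closed[OF vw(1), of z] closed[OF vw(2), of z] vw(3,4) by auto
      then show False
        using \<open>e1 \<noteq> e2\<close> by simp
    qed
  qed
  have verts: "\<Union>(cw_verts ` piece ` S) = S"
  proof
    show "\<Union>(cw_verts ` piece ` S) \<subseteq> S"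
    proof
      fix z assume "z \<in> \<Union>(cw_verts ` piece ` S)"
      then obtain v where "v \<in> S" "z \<in> cw_verts (piece v)"
        by blast
      then show "z \<in> S"
        using closed by blast
    qed
    show "S \<subseteq> \<Union>(cw_verts ` piece ` S)"
      using own by auto
  qed
  have "\<forall>e\<in>piece ` S. cw_wf e \<and> cw_depth e \<le> c + ceillog2 (card (cw_verts e))"
    using small by blast
  then obtain u where u: "cw_merges (piece ` S) u" "cw_depth u \<le> c + 1 + ceillog2 (card S)"
    using cw_merge_ceillog2[OF _ _ disj] assms(1,2) unfolding verts by blast
  have "cw_lab u v = cw_lab (piece v) v" if "v \<in> S" for v
    using u(1) own[OF that] that unfolding cw_merges_def by blast
  then show ?thesis
    using u unfolding cw_merges_def verts by (intro exI[of _ u]) simp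
qed

fun cw_add_arcs :: "(nat \<times> nat) list \<Rightarrow> 'v cwexp \<Rightarrow> 'v cwexp" where
  "cw_add_arcs [] e = e"
| "cw_add_arcs ((i, j) # ps) e = CArcs i j (cw_add_arcs ps e)"

lemma cw_add_arcs_simps [simp]:
  "cw_verts (cw_add_arcs ps e) = cw_verts e"
  "cw_lab (cw_add_arcs ps e) = cw_lab e"
  "cw_wf (cw_add_arcs ps e) \<longleftrightarrow> cw_wf e \<and> (\<forall>(i, j)\<in>set ps. i \<noteq> j)"
  "cw_labels (cw_add_arcs ps e) = cw_labels e \<union> (\<Union>(i, j)\<in>set ps. {i, j})"
  "cw_depth (cw_add_arcs ps e) = cw_depth e + length ps"
  by (induction ps e rule: cw_add_arcs.induct) auto

lemma cw_arcs_cw_add_arcs: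
  "cw_arcs (cw_add_arcs ps e) = cw_arcs e \<union>
     {(u, w). u \<in> cw_verts e \<and> w \<in> cw_verts e \<and> (cw_lab e u, cw_lab e w) \<in> set ps}"
  by (induction ps e rule: cw_add_arcs.induct) auto

lemma cw_add_order_arcs:
  assumes "cw_wf U" "finite A" "strict_order_on A r" "inj_on lab A"
    and "\<forall>v\<in>cw_verts U. g v \<in> A \<and> cw_lab U v = lab (g v)"
  shows "\<exists>e. cw_wf e \<and> cw_verts e = cw_verts U \<and> cw_lab e = cw_lab U \<and>
    cw_arcs e = cw_arcs U \<union> {(u, w). u \<in> cw_verts U \<and> w \<in> cw_verts U \<and> r (g u) (g w)} \<and>
    cw_labels e \<subseteq> cw_labels U \<union> lab ` A \<and>
    2 * cw_depth e \<le> 2 * cw_depth U + card A * (card A - 1)"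
proof -
  define Q where "Q = {(a, b). a \<in> A \<and> b \<in> A \<and> r a b}"
  have "finite Q"
    by (rule finite_subset[of _ "A \<times> A"]) (auto simp: Q_def assms(2))
  then obtain ps where ps: "set ps = Q" "distinct ps"
    using finite_distinct_list by blast
  define e where "e = cw_add_arcs (map (map_prod lab lab) ps) U"
  have irrefl: "\<forall>a\<in>A. \<not> r a a"
    using assms(3) unfolding strict_order_on_def by blast
  have label_pair: "(lab a, lab b) \<in> map_prod lab lab ` Q \<longleftrightarrow> r a b" if "a \<in> A" "b \<in> A" for a b
  proof
    assume "(lab a, lab b) \<in> map_prod lab lab ` Q"
    then obtain a' b' where "a' \<in> A" "b' \<in> A" "r a' b'" "lab a' = lab a" "lab b' = lab b"
      unfolding Q_def by auto
    then show "r a b"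
      using inj_onD[OF assms(4)] that by metis
  next
    assume "r a b"
    then show "(lab a, lab b) \<in> map_prod lab lab ` Q"
      using that unfolding Q_def by force
  qed
  have arc_iff: "(cw_lab U u, cw_lab U w) \<in> set (map (map_prod lab lab) ps) \<longleftrightarrow> r (g u) (g w)"
    if "u \<in> cw_verts U" "w \<in> cw_verts U" for u w
    using label_pair[of "g u" "g w"] assms(5) that ps(1) by simp
  have "cw_wf e"
    unfolding e_def using assms(1,4) irrefl ps(1) by (auto simp: Q_def inj_on_def)
  moreover have "cw_arcs e = cw_arcs U \<union> {(u, w). u \<in> cw_verts U \<and> w \<in> cw_verts U \<and> r (g u) (g w)}"
    unfolding e_def cw_arcs_cw_add_arcs by (auto simp del: set_map simp add: arc_iff)
  moreover have "cw_labels e \<subseteq> cw_labels U \<union> lab ` A"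
    unfolding e_def using ps(1) by (auto simp: Q_def)
  moreover have "2 * cw_depth e \<le> 2 * cw_depth U + card A * (card A - 1)"
    using card_strict_order_pairs[OF assms(2,3)] distinct_card[OF ps(2)] ps(1)
    unfolding e_def Q_def by simp
  ultimately show ?thesis
    by (intro exI[of _ e]) (simp add: e_def)
qed

fun cw_relabel_into :: "nat list \<Rightarrow> nat \<Rightarrow> 'v cwexp \<Rightarrow> 'v cwexp" where
  "cw_relabel_into [] t e = e"
| "cw_relabel_into (i # js) t e = CRelabel i t (cw_relabel_into js t e)"

lemma cw_relabel_into_simps [simp]:
  "cw_verts (cw_relabel_into js t e) = cw_verts e"
  "cw_arcs (cw_relabel_into js t e) = cw_arcs e"
  "cw_wf (cw_relabel_into js t e) = cw_wf e"
  "cw_labels (cw_relabel_into js t e) \<subseteq> cw_labels e \<union> set js \<union> {t}"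
  "cw_depth (cw_relabel_into js t e) = cw_depth e + length js"
  by (induction js) auto

lemma cw_lab_cw_relabel_into:
  "t \<notin> set js \<Longrightarrow> cw_lab (cw_relabel_into js t e) v = (if cw_lab e v \<in> set js then t else cw_lab e v)"
  by (induction js) auto

lemma cw_relabel_to_single:
  assumes "cw_labels e \<subseteq> {..<k}" "t < k"
  shows "\<exists>e'. cw_wf e' = cw_wf e \<and> cw_verts e' = cw_verts e \<and> cw_arcs e' = cw_arcs e \<and>
    (\<forall>v\<in>cw_verts e. cw_lab e' v = t) \<and> cw_labels e' \<subseteq> {..<k} \<and> cw_depth e' = cw_depth e + (k - 1)"
proof -
  define js where "js = filter (\<lambda>i. i \<noteq> t) [0..<k]"
  have "set js = {..<k} - {t}" "distinct js"
    unfolding js_def by auto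
  then have "length js = k - 1"
    using distinct_card assms(2) by fastforce
  moreover have "cw_lab (cw_relabel_into js t e) v = t" if "v \<in> cw_verts e" for v
    using cw_lab_in_cw_labels[OF that] assms \<open>set js = {..<k} - {t}\<close>
    by (subst cw_lab_cw_relabel_into) auto
  moreover have "cw_labels (cw_relabel_into js t e) \<subseteq> {..<k}"
    using cw_relabel_into_simps(4)[of js t e] assms \<open>set js = {..<k} - {t}\<close> by blast
  ultimately show ?thesis
    by (intro exI[of _ "cw_relabel_into js t e"]) simp
qed

definition cw_represents :: "'v set \<Rightarrow> ('v \<Rightarrow> 'v \<Rightarrow> bool) \<Rightarrow> nat \<Rightarrow> 'v cwexp \<Rightarrow> bool" where
  "cw_represents S lt t e \<longleftrightarrow> cw_wf e \<and> cw_verts e = S \<and>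
     cw_arcs e = {(x, y). x \<in> S \<and> y \<in> S \<and> lt x y} \<and> (\<forall>v\<in>S. cw_lab e v = t)"

lemma cw_represents_singleton: "\<not> lt x x \<Longrightarrow> cw_represents {x} lt t (CVertex x t)"
  unfolding cw_represents_def by auto

lemma cw_represents_insert_isolated:
  assumes "cw_represents S lt t e" "x \<notin> S" "\<not> lt x x" "\<forall>y\<in>S. \<not> lt x y \<and> \<not> lt y x"
  shows "cw_represents (insert x S) lt t (CUnion e (CVertex x t))"
  using assms unfolding cw_represents_def by auto

(* One union, at most k(k-1)/2 arc insertions and k - 1 relabellings per letter position. *)
definition level_depth :: "nat \<Rightarrow> nat" where
  "level_depth k = Suc (k * (k - 1) div 2 + (k - 1))"

(* A questionable representation as in has_qrep. *)
locale questionable_rep =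
  fixes V :: "'a set" and lt :: "'a \<Rightarrow> 'a \<Rightarrow> bool" and k l :: nat
    and D :: "nat \<Rightarrow> 'b set" and R :: "nat \<Rightarrow> 'b \<Rightarrow> 'b \<Rightarrow> bool" and f :: "'a \<Rightarrow> 'b list"
  assumes finite_V: "finite V"
    and strict_order_R: "j < l \<Longrightarrow> strict_order_on (D j) (R j)"
    and finite_D: "j < l \<Longrightarrow> finite (D j)"
    and card_D: "j < l \<Longrightarrow> card (D j) \<le> k"
    and inj_f: "inj_on f V"
    and word_f: "x \<in> V \<Longrightarrow> is_word D (f x)"
    and length_f: "x \<in> V \<Longrightarrow> length (f x) < l"
    and next_less_f: "x \<in> V \<Longrightarrow> y \<in> V \<Longrightarrow> next_less R (f x) (f y) \<longleftrightarrow> lt x y"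
begin

definition extensions :: "'b list \<Rightarrow> 'a set" where
  "extensions p = {x \<in> V. length p < length (f x) \<and> take (length p) (f x) = p}"

lemma extensions_subset: "extensions p \<subseteq> V"
  unfolding extensions_def by auto

lemma finite_extensions: "finite (extensions p)"
  using finite_subset[OF extensions_subset finite_V] .

lemma extensions_letter:
  assumes "x \<in> extensions p"
  shows "Suc (length p) < l" "f x ! length p \<in> D (length p)"
    and "take (Suc (length p)) (f x) = p @ [f x ! length p]"
proof -
  have x: "x \<in> V" "length p < length (f x)" "take (length p) (f x) = p"
    using assms unfolding extensions_def by auto
  then show "Suc (length p) < l"
    using length_f by (meson Suc_le_eq le_less_trans)
  show "f x ! length p \<in> D (length p)"
    using word_f x(1,2) unfolding is_word_def by blast
  show "take (Suc (length p)) (f x) = p @ [f x ! length p]"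
    using x(2,3) by (simp add: take_Suc_conv_app_nth)
qed

lemma extensions_snoc:
  "extensions (p @ [a]) = {x \<in> extensions p. Suc (length p) < length (f x) \<and> f x ! length p = a}"
proof -
  have "take (Suc (length p)) X = p @ [a] \<longleftrightarrow> take (length p) X = p \<and> X ! length p = a"
    if "length p < length X" for X :: "'b list"
    using that by (auto simp: take_Suc_conv_app_nth)
  then show ?thesis
    unfolding extensions_def by auto
qed

lemma lt_irrefl: "x \<in> V \<Longrightarrow> \<not> lt x x"
  using next_less_f[of x x] next_less_irrefl[of R "f x"] by simp

lemma lt_at_question:
  assumes "x \<in> extensions p" "y \<in> extensions p" "f x ! length p \<noteq> f y ! length p"
  shows "lt x y \<longleftrightarrow> R (length p) (f x ! length p) (f y ! length p)"
proof -
  have "x \<in> V" "y \<in> V" "take (length p) (f x) = take (length p) (f y)"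
    and "length p < length (f x)" "length p < length (f y)"
    using assms(1,2) unfolding extensions_def by auto
  then show ?thesis
    using next_less_f[of x y] next_less_at_difference[of "length p" "f x" "f y" R] assms(3) by simp
qed

lemma lt_same_letter:
  assumes "x \<in> extensions p" "y \<in> extensions p" "f x ! length p = f y ! length p" "lt x y"
  shows "x \<in> extensions (p @ [f x ! length p]) \<and> y \<in> extensions (p @ [f x ! length p])"
proof -
  have "take (Suc (length p)) (f x) = take (Suc (length p)) (f y)"
    using extensions_letter(3)[OF assms(1)] extensions_letter(3)[OF assms(2)] assms(3) by simp
  moreover have "next_less R (f x) (f y)"
    using next_less_f[of x y] assms(1,2,4) extensions_subset by blast
  ultimately have "Suc (length p) \<noteq> length (f x)" "Suc (length p) \<noteq> length (f y)"
    using next_less_prefix_incomparable[of "f x" "f y" R] next_less_prefix_incomparable[of "f y" "f x" R]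
    by auto
  moreover have "length p < length (f x)" "length p < length (f y)"
    using assms(1,2) unfolding extensions_def by auto
  ultimately show ?thesis
    using assms(1-3) unfolding extensions_snoc by simp
qed

lemma same_letter_lt_in_child:
  "{(x, y). x \<in> extensions p \<and> y \<in> extensions p \<and> f x ! length p = f y ! length p \<and> lt x y} =
    (\<Union>a. {(x, y). x \<in> extensions (p @ [a]) \<and> y \<in> extensions (p @ [a]) \<and> lt x y})"
proof (intro equalityI subsetI)
  fix z assume "z \<in> {(x, y). x \<in> extensions p \<and> y \<in> extensions p \<and>
    f x ! length p = f y ! length p \<and> lt x y}"
  then obtain x y where "z = (x, y)" "x \<in> extensions p" "y \<in> extensions p"
    "f x ! length p = f y ! length p" "lt x y"
    by blast
  then show "z \<in> (\<Union>a. {(x, y). x \<in> extensions (p @ [a]) \<and> y \<in> extensions (p @ [a]) \<and> lt x y})"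
    using lt_same_letter by blast
next
  fix z assume "z \<in> (\<Union>a. {(x, y). x \<in> extensions (p @ [a]) \<and> y \<in> extensions (p @ [a]) \<and> lt x y})"
  then show "z \<in> {(x, y). x \<in> extensions p \<and> y \<in> extensions p \<and>
    f x ! length p = f y ! length p \<and> lt x y}"
    unfolding extensions_snoc by auto
qed

lemma extensions_lt_split:
  "{(x, y). x \<in> extensions p \<and> y \<in> extensions p \<and> lt x y} =
    {(x, y). x \<in> extensions p \<and> y \<in> extensions p \<and> f x ! length p = f y ! length p \<and> lt x y} \<union>
    {(x, y). x \<in> extensions p \<and> y \<in> extensions p \<and> R (length p) (f x ! length p) (f y ! length p)}"
proof -
  have "lt x y \<longleftrightarrow> f x ! length p = f y ! length p \<and> lt x y \<or>
      R (length p) (f x ! length p) (f y ! length p)"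
    if "x \<in> extensions p" "y \<in> extensions p" for x y
  proof (cases "f x ! length p = f y ! length p")
    case True
    have "\<not> R (length p) a a" if "a \<in> D (length p)" for a
      using strict_order_R[OF Suc_lessD[OF extensions_letter(1)[OF \<open>x \<in> extensions p\<close>]]] that
      unfolding strict_order_on_def by blast
    then show ?thesis
      using True extensions_letter(2)[OF that(2)] by simp
  next
    case False
    then show ?thesis
      using lt_at_question[OF that] by simp
  qed
  then show ?thesis
    by blast
qed

lemma extensions_pieces:
  assumes lab: "lab ` D (length p) \<subseteq> {..<k}"
    and children: "\<And>a. a \<in> D (length p) \<Longrightarrow> extensions (p @ [a]) \<noteq> {} \<Longrightarrow>
      \<exists>e. cw_represents (extensions (p @ [a])) lt (lab a) e \<and> cw_labels e \<subseteq> {..<k} \<and>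
        cw_depth e \<le> c + ceillog2 (card (extensions (p @ [a])))"
  obtains piece where
    "\<And>v. v \<in> extensions p \<Longrightarrow> v \<in> cw_verts (piece v)"
    "\<And>v w. v \<in> extensions p \<Longrightarrow> w \<in> cw_verts (piece v) \<Longrightarrow> w \<in> extensions p \<and> piece w = piece v"
    "\<And>v. v \<in> extensions p \<Longrightarrow>
      cw_wf (piece v) \<and> cw_depth (piece v) \<le> c + ceillog2 (card (cw_verts (piece v)))"
    "\<And>v. v \<in> extensions p \<Longrightarrow> cw_lab (piece v) v = lab (f v ! length p) \<and> cw_labels (piece v) \<subseteq> {..<k}"
    "(\<Union>v\<in>extensions p. cw_arcs (piece v)) =
      {(x, y). x \<in> extensions p \<and> y \<in> extensions p \<and> f x ! length p = f y ! length p \<and> lt x y}"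
proof -
  define d where "d = length p"
  define good where "good a e \<longleftrightarrow> cw_represents (extensions (p @ [a])) lt (lab a) e \<and>
    cw_labels e \<subseteq> {..<k} \<and> cw_depth e \<le> c + ceillog2 (card (extensions (p @ [a])))" for a e
  have "\<forall>a. \<exists>e. a \<in> D d \<and> extensions (p @ [a]) \<noteq> {} \<longrightarrow> good a e"
    using children unfolding good_def d_def by blast
  then obtain G where G: "\<And>a. a \<in> D d \<Longrightarrow> extensions (p @ [a]) \<noteq> {} \<Longrightarrow> good a (G a)"
    by metis
  define piece where
    "piece v = (if length (f v) = Suc d then CVertex v (lab (f v ! d)) else G (f v ! d))" for v
  have inner: "v \<in> extensions (p @ [f v ! d]) \<and> good (f v ! d) (piece v)"
    if "v \<in> extensions p" "length (f v) \<noteq> Suc d" for v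
  proof -
    have "Suc d < length (f v)"
      using that unfolding extensions_def d_def by auto
    then have "v \<in> extensions (p @ [f v ! d])"
      using that(1) unfolding extensions_snoc d_def by simp
    moreover have "f v ! d \<in> D d"
      using extensions_letter(2)[OF that(1)] unfolding d_def .
    ultimately show ?thesis
      using G that(2) unfolding piece_def by auto
  qed
  have own: "v \<in> cw_verts (piece v)" if "v \<in> extensions p" for v
    using inner[OF that] unfolding piece_def good_def cw_represents_def by auto
  have closed: "w \<in> extensions p \<and> piece w = piece v"
    if "v \<in> extensions p" "w \<in> cw_verts (piece v)" for v w
  proof (cases "length (f v) = Suc d")
    case True
    then show ?thesis
      using that unfolding piece_def by simp
  next
    case False
    then have "w \<in> extensions (p @ [f v ! d])"
      using inner[OF that(1)] that(2) unfolding good_def cw_represents_def by simp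
    then have "w \<in> extensions p" "Suc d < length (f w)" "f w ! d = f v ! d"
      unfolding extensions_snoc d_def by auto
    then show ?thesis
      using False unfolding piece_def by simp
  qed
  have small: "cw_wf (piece v) \<and> cw_depth (piece v) \<le> c + ceillog2 (card (cw_verts (piece v)))"
    if "v \<in> extensions p" for v
    using inner[OF that] unfolding piece_def good_def cw_represents_def by auto
  have labels: "cw_lab (piece v) v = lab (f v ! length p) \<and> cw_labels (piece v) \<subseteq> {..<k}"
    if "v \<in> extensions p" for v
    using inner[OF that] lab extensions_letter(2)[OF that]
    unfolding piece_def good_def cw_represents_def d_def by auto
  have "(\<Union>v\<in>extensions p. cw_arcs (piece v)) =
      (\<Union>a. {(x, y). x \<in> extensions (p @ [a]) \<and> y \<in> extensions (p @ [a]) \<and> lt x y})"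
  proof (intro equalityI subsetI)
    fix z assume "z \<in> (\<Union>v\<in>extensions p. cw_arcs (piece v))"
    then obtain v where v: "v \<in> extensions p" "z \<in> cw_arcs (piece v)"
      by blast
    then have "length (f v) \<noteq> Suc d"
      unfolding piece_def by auto
    then show "z \<in> (\<Union>a. {(x, y). x \<in> extensions (p @ [a]) \<and> y \<in> extensions (p @ [a]) \<and> lt x y})"
      using v(2) inner[OF v(1)] unfolding good_def cw_represents_def by blast
  next
    fix z assume "z \<in> (\<Union>a. {(x, y). x \<in> extensions (p @ [a]) \<and> y \<in> extensions (p @ [a]) \<and> lt x y})"
    then obtain a x y where z: "z = (x, y)" "x \<in> extensions (p @ [a])" "y \<in> extensions (p @ [a])" "lt x y"
      by blast
    then have x: "x \<in> extensions p" "length (f x) \<noteq> Suc d" "f x ! d = a"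
      unfolding extensions_snoc d_def by auto
    then have "z \<in> cw_arcs (piece x)"
      using inner[OF x(1,2)] z unfolding good_def cw_represents_def by simp
    then show "z \<in> (\<Union>v\<in>extensions p. cw_arcs (piece v))"
      using x(1) by blast
  qed
  then show ?thesis
    using that[OF own closed small labels] unfolding same_letter_lt_in_child by blast
qed

lemma extensions_merge_children:
  assumes "extensions p \<noteq> {}" and lab: "lab ` D (length p) \<subseteq> {..<k}"
    and children: "\<And>a. a \<in> D (length p) \<Longrightarrow> extensions (p @ [a]) \<noteq> {} \<Longrightarrow>
      \<exists>e. cw_represents (extensions (p @ [a])) lt (lab a) e \<and> cw_labels e \<subseteq> {..<k} \<and>
        cw_depth e \<le> c + ceillog2 (card (extensions (p @ [a])))"
  shows "\<exists>U. cw_wf U \<and> cw_verts U = extensions p \<and>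
    cw_arcs U = {(x, y). x \<in> extensions p \<and> y \<in> extensions p \<and>
                         f x ! length p = f y ! length p \<and> lt x y} \<and>
    (\<forall>v\<in>extensions p. cw_lab U v = lab (f v ! length p)) \<and> cw_labels U \<subseteq> {..<k} \<and>
    cw_depth U \<le> c + 1 + ceillog2 (card (extensions p))"
proof -
  obtain piece where piece:
    "\<And>v. v \<in> extensions p \<Longrightarrow> v \<in> cw_verts (piece v)"
    "\<And>v w. v \<in> extensions p \<Longrightarrow> w \<in> cw_verts (piece v) \<Longrightarrow> w \<in> extensions p \<and> piece w = piece v"
    "\<And>v. v \<in> extensions p \<Longrightarrow>
      cw_wf (piece v) \<and> cw_depth (piece v) \<le> c + ceillog2 (card (cw_verts (piece v)))"
    "\<And>v. v \<in> extensions p \<Longrightarrow> cw_lab (piece v) v = lab (f v ! length p) \<and> cw_labels (piece v) \<subseteq> {..<k}"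
    "(\<Union>v\<in>extensions p. cw_arcs (piece v)) =
      {(x, y). x \<in> extensions p \<and> y \<in> extensions p \<and> f x ! length p = f y ! length p \<and> lt x y}"
    using extensions_pieces[OF lab children] by blast
  obtain U where U: "cw_wf U" "cw_verts U = extensions p"
      "cw_arcs U = (\<Union>v\<in>extensions p. cw_arcs (piece v))"
      "cw_labels U = (\<Union>v\<in>extensions p. cw_labels (piece v))"
      "\<forall>v\<in>extensions p. cw_lab U v = cw_lab (piece v) v"
      "cw_depth U \<le> c + 1 + ceillog2 (card (extensions p))"
    using cw_merge_pieces[OF finite_extensions assms(1), of piece c] piece(1-3) by blast
  have "cw_labels U \<subseteq> {..<k}"
    using piece(4) unfolding U(4) by blast
  then show ?thesis
    using U piece(4,5) by (intro exI[of _ U]) auto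
qed

lemma extensions_expression:
  assumes "l \<le> Suc (length p + h)" "t < k" "extensions p \<noteq> {}"
  shows "\<exists>e. cw_represents (extensions p) lt t e \<and> cw_labels e \<subseteq> {..<k} \<and>
    cw_depth e \<le> h * level_depth k + ceillog2 (card (extensions p))"
  using assms
proof (induction h arbitrary: p t)
  case 0
  then show ?case
    using extensions_letter(1) by fastforce
next
  case (Suc h)
  define d where "d = length p"
  have "d < l"
    using extensions_letter(1) Suc.prems(3) unfolding d_def by (meson Suc_lessD ex_in_conv)
  then obtain lab where lab: "inj_on lab (D d)" "lab ` D d \<subseteq> {..<k}"
    using card_le_inj[of "D d" "{..<k}"] finite_D card_D by auto
  have children: "\<exists>e. cw_represents (extensions (p @ [a])) lt (lab a) e \<and> cw_labels e \<subseteq> {..<k} \<and>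
      cw_depth e \<le> h * level_depth k + ceillog2 (card (extensions (p @ [a])))"
    if "a \<in> D (length p)" "extensions (p @ [a]) \<noteq> {}" for a
    using Suc.IH[of "p @ [a]" "lab a"] Suc.prems(1) lab(2) that unfolding d_def by auto
  obtain U where U: "cw_wf U" "cw_verts U = extensions p"
      "cw_arcs U = {(x, y). x \<in> extensions p \<and> y \<in> extensions p \<and> f x ! d = f y ! d \<and> lt x y}"
      "\<forall>v\<in>extensions p. cw_lab U v = lab (f v ! d)" "cw_labels U \<subseteq> {..<k}"
      "cw_depth U \<le> h * level_depth k + 1 + ceillog2 (card (extensions p))"
    using extensions_merge_children[OF Suc.prems(3), of lab "h * level_depth k"] children lab(2)
    unfolding d_def by blast
  obtain e1 where e1: "cw_wf e1" "cw_verts e1 = extensions p" "cw_lab e1 = cw_lab U"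
      "cw_arcs e1 = cw_arcs U \<union> {(u, w). u \<in> extensions p \<and> w \<in> extensions p \<and> R d (f u ! d) (f w ! d)}"
      "cw_labels e1 \<subseteq> cw_labels U \<union> lab ` D d"
      "2 * cw_depth e1 \<le> 2 * cw_depth U + card (D d) * (card (D d) - 1)"
    using cw_add_order_arcs[OF U(1) finite_D[OF \<open>d < l\<close>] strict_order_R[OF \<open>d < l\<close>] lab(1),
        of "\<lambda>v. f v ! d"] U(2,4) extensions_letter(2) unfolding d_def by auto
  have "cw_arcs e1 = {(x, y). x \<in> extensions p \<and> y \<in> extensions p \<and> lt x y}"
    unfolding e1(4) U(3) d_def extensions_lt_split ..
  moreover have "cw_labels e1 \<subseteq> {..<k}"
    using e1(5) U(5) lab(2) by blast
  ultimately obtain e where e: "cw_represents (extensions p) lt t e" "cw_labels e \<subseteq> {..<k}"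
      "cw_depth e = cw_depth e1 + (k - 1)"
    using cw_relabel_to_single[of e1 k t] Suc.prems(2) e1(1,2) unfolding cw_represents_def by auto
  have "card (D d) * (card (D d) - 1) \<le> k * (k - 1)"
    using card_D[OF \<open>d < l\<close>] by (intro mult_le_mono) auto
  then have "cw_depth e1 \<le> h * level_depth k + 1 + ceillog2 (card (extensions p)) + k * (k - 1) div 2"
    using e1(6) U(6) by linarith
  then have "cw_depth e \<le> Suc h * level_depth k + ceillog2 (card (extensions p))"
    using e(3) unfolding level_depth_def by simp
  then show ?case
    using e(1,2) by blast
qed

lemma extensions_Nil_expression:
  assumes "extensions [] \<noteq> {}" "0 < k"
  shows "\<exists>e. cw_represents (extensions []) lt 0 e \<and> cw_labels e \<subseteq> {..<k} \<and>
    cw_depth e \<le> (l - 1) * level_depth k + ceillog2 (card V)"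
proof -
  obtain e where "cw_represents (extensions []) lt 0 e" "cw_labels e \<subseteq> {..<k}"
      "cw_depth e \<le> (l - 1) * level_depth k + ceillog2 (card (extensions []))"
    using extensions_expression[of "[]" "l - 1" 0, OF _ assms(2,1)] by fastforce
  moreover have "ceillog2 (card (extensions [])) \<le> ceillog2 (card V)"
    by (intro ceillog2_mono card_mono finite_V extensions_subset)
  ultimately show ?thesis
    by (intro exI[of _ e]) simp
qed

lemma empty_word_isolated:
  assumes "x0 \<in> V" "f x0 = []"
  shows "V = insert x0 (extensions [])" "x0 \<notin> extensions []"
    and "\<forall>y\<in>extensions []. \<not> lt x0 y \<and> \<not> lt y x0"
proof -
  show "V = insert x0 (extensions [])"
  proof (intro equalityI subsetI)
    fix x assume "x \<in> V"
    show "x \<in> insert x0 (extensions [])"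
    proof (cases "f x = []")
      case True
      then show ?thesis
        using inj_onD[OF inj_f _ \<open>x \<in> V\<close> assms(1)] assms(2) by simp
    next
      case False
      then show ?thesis
        using \<open>x \<in> V\<close> unfolding extensions_def by simp
    qed
  qed (use assms(1) extensions_subset in auto)
  show "x0 \<notin> extensions []"
    using assms(2) unfolding extensions_def by simp
  show "\<forall>y\<in>extensions []. \<not> lt x0 y \<and> \<not> lt y x0"
  proof
    fix y assume "y \<in> extensions []"
    then have "y \<in> V"
      using extensions_subset by blast
    then show "\<not> lt x0 y \<and> \<not> lt y x0"
      using next_less_f[OF assms(1) \<open>y \<in> V\<close>] next_less_f[OF \<open>y \<in> V\<close> assms(1)]
        next_less_prefix_incomparable[of "[]" "f y" R] assms(2) by simp
  qed
qed

lemma order_expression: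
  assumes "V \<noteq> {}" "0 < k"
  shows "\<exists>e. cw_represents V lt 0 e \<and> cw_labels e \<subseteq> {..<k} \<and>
    cw_depth e \<le> (l - 1) * level_depth k + ceillog2 (card V) + 1"
proof (cases "\<exists>x0\<in>V. f x0 = []")
  case False
  then have "V = extensions []"
    unfolding extensions_def by auto
  then show ?thesis
    using extensions_Nil_expression assms by force
next
  case True
  then obtain x0 where x0: "x0 \<in> V" "f x0 = []"
    by blast
  note V = empty_word_isolated[OF x0]
  show ?thesis
  proof (cases "extensions [] = {}")
    case True
    then show ?thesis
      using cw_represents_singleton[of lt x0 0, OF lt_irrefl[OF x0(1)]] V(1) assms(2)
      by (intro exI[of _ "CVertex x0 0"]) simp
  next
    case False
    then obtain e where "cw_represents (extensions []) lt 0 e" "cw_labels e \<subseteq> {..<k}"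
        "cw_depth e \<le> (l - 1) * level_depth k + ceillog2 (card V)"
      using extensions_Nil_expression assms(2) by blast
    then show ?thesis
      using cw_represents_insert_isolated[OF _ V(2) lt_irrefl[OF x0(1)] V(3)] V(1) assms(2)
      by (intro exI[of _ "CUnion e (CVertex x0 0)"]) auto
  qed
qed

end

lemma has_qrep_questionable_rep:
  assumes "has_qrep V lt TYPE('b) k l" "finite V"
  obtains D :: "nat \<Rightarrow> 'b set" and R f where "questionable_rep V lt k l D R f" "0 < l"
proof -
  obtain i and D :: "nat \<Rightarrow> 'b set" and R f where
    q: "i < l" "\<forall>j<l. strict_order_on (D j) (R j)" "finite_width l D k" "inj_on f V"
       "f ` V \<subseteq> next_dom i l D" "\<forall>x\<in>V. \<forall>y\<in>V. next_less R (f x) (f y) \<longleftrightarrow> lt x y"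
    using assms(1) unfolding has_qrep_def by (elim exE conjE) (rule that, assumption+)
  have "questionable_rep V lt k l D R f"
  proof
    show "finite V"
      by (rule assms(2))
    show "inj_on f V"
      by (rule q(4))
    fix j x y
    show "j < l \<Longrightarrow> strict_order_on (D j) (R j)" "j < l \<Longrightarrow> finite (D j)" "j < l \<Longrightarrow> card (D j) \<le> k"
      using q(2,3) unfolding finite_width_def by blast+
    show "x \<in> V \<Longrightarrow> is_word D (f x)" "x \<in> V \<Longrightarrow> length (f x) < l"
      using q(5) unfolding next_dom_def by blast+
    show "x \<in> V \<Longrightarrow> y \<in> V \<Longrightarrow> next_less R (f x) (f y) \<longleftrightarrow> lt x y"
      using q(6) by blast
  qed
  then show ?thesis
    using q(1) that by simp
qed

lemma level_depth_bound:
  fixes k l n :: nat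
  assumes "2 \<le> k" "0 < l" "0 < n"
  shows "int ((l - 1) * level_depth k + ceillog2 n + 1) \<le>
    int l * (int k * (int k - 1) + \<lceil>log 2 (real k - 1)\<rceil>) + \<lceil>log 2 (real n)\<rceil> + (int l - 1) * (int k - 1)"
proof -
  define K where "K = int k * (int k - 1)"
  have "2 \<le> K"
    using mult_mono[of 2 "int k" 1 "int k - 1"] assms(1) unfolding K_def by simp
  have "2 \<le> k * (k - 1)"
    using mult_le_mono[of 2 k 1 "k - 1"] assms(1) by simp
  then have "level_depth k \<le> k * (k - 1) + (k - 1)"
    unfolding level_depth_def by linarith
  then have "int (level_depth k) \<le> int (k * (k - 1) + (k - 1))"
    by (simp only: of_nat_le_iff)
  also have "\<dots> = K + (int k - 1)"
    using assms(1) unfolding K_def by (simp add: of_nat_diff)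
  finally have "int (level_depth k) \<le> K + (int k - 1)" .
  then have "(int l - 1) * int (level_depth k) \<le> (int l - 1) * (K + (int k - 1))"
    using assms(2) by (intro mult_left_mono) simp_all
  moreover have "(int l - 1) * K + 1 \<le> int l * K"
    using \<open>2 \<le> K\<close> by (simp add: algebra_simps)
  moreover have "0 \<le> \<lceil>log 2 (real k - 1)\<rceil>"
  proof -
    have "1 \<le> real k - 1"
      using assms(1) by simp
    then have "0 \<le> log 2 (real k - 1)"
      by (subst zero_le_log_cancel_iff) simp_all
    then show ?thesis
      by simp
  qed
  then have "0 \<le> int l * \<lceil>log 2 (real k - 1)\<rceil>"
    by simp
  moreover have "int (ceillog2 n) = \<lceil>log 2 (real n)\<rceil>"
    using ceillog2_ge_log[OF assms(3)] ceillog2_less_log[OF assms(3)]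
    by (intro ceiling_unique[symmetric]) simp_all
  moreover have "int ((l - 1) * level_depth k + ceillog2 n + 1) =
      (int l - 1) * int (level_depth k) + int (ceillog2 n) + 1"
    using assms(2) by (simp add: of_nat_diff)
  moreover have "(int l - 1) * (K + (int k - 1)) = (int l - 1) * K + (int l - 1) * (int k - 1)"
    by (simp add: distrib_left)
  moreover have "int l * (K + \<lceil>log 2 (real k - 1)\<rceil>) = int l * K + int l * \<lceil>log 2 (real k - 1)\<rceil>"
    by (simp add: distrib_left)
  ultimately show ?thesis
    unfolding K_def[symmetric] by linarith
qed

theorem lemma7p4:
  fixes V :: "'a set" and lt :: "'a \<Rightarrow> 'a \<Rightarrow> bool" and n k l :: nat
  assumes "finite V" and "V \<noteq> {}" and "card V = n"
    and "strict_order_on V lt"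
    and "k \<ge> 2"
    and "has_qrep V lt TYPE('b) k l"
  shows "\<exists>e :: 'a cwexp. cw_wf e \<and> cw_verts e = V \<and>
           cw_arcs e = {(x, y). x \<in> V \<and> y \<in> V \<and> lt x y} \<and>
           card (cw_labels e) \<le> k \<and>
           int (cw_depth e) \<le> int l * (int k * (int k - 1) + \<lceil>log 2 (real k - 1)\<rceil>)
              + \<lceil>log 2 (real n)\<rceil> + (int l - 1) * (int k - 1)"
proof -
  obtain D :: "nat \<Rightarrow> 'b set" and R f where rep: "questionable_rep V lt k l D R f" and "0 < l"
    using has_qrep_questionable_rep[OF assms(6,1)] .
  obtain e where e: "cw_represents V lt 0 e" "cw_labels e \<subseteq> {..<k}"
      "cw_depth e \<le> (l - 1) * level_depth k + ceillog2 n + 1"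
    using questionable_rep.order_expression[OF rep assms(2)] assms(3,5) by auto
  have "card (cw_labels e) \<le> k"
    using card_mono[OF _ e(2)] by simp
  moreover have "0 < n"
    using assms(1-3) by auto
  moreover have "int (cw_depth e) \<le> int ((l - 1) * level_depth k + ceillog2 n + 1)"
    using e(3) by (simp only: of_nat_le_iff)
  ultimately show ?thesis
    using e(1) level_depth_bound[OF assms(5) \<open>0 < l\<close> \<open>0 < n\<close>]
    unfolding cw_represents_def by (intro exI[of _ e]) simp
qed

end
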